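(* For each integer $i \ge 1$ let $X_i$ be the set of all positive integers $x$ with $\{x(\tfrac32)^i\} < \tfrac12$. Then for every integer $n \ge 1$, $\bigcap_{i=1}^{n} X_i$ is exactly the set of positive multiples of $2^n$.
   Context: For a real number $a$, $\{a\}$ denotes its fractional part, $a - \lfloor a\rfloor$. *)

theory Defs
  imports Complex_Main
begin

definition X :: "nat \<Rightarrow> nat set" where
  "X i = {x::nat. x > 0 \<and> frac (real x * (3/2) ^ i) < 1/2}"

end

theory Submission
  imports Defs
begin

text \<open>If \<open>x = 2^j y\<close>, then \<open>x (3/2)^(j+1) = 3^(j+1) y / 2\<close>, whose fractional part is \<open>0\<close> or \<open>1/2\<close>
  according as \<open>y\<close> is even or odd. So among the multiples of \<open>2^j\<close>, the set \<open>X (j+1)\<close> picks out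
  exactly the multiples of \<open>2^(j+1)\<close>, and the theorem follows by induction on \<open>n\<close>.\<close>

lemma frac_half_less_iff_even: "frac (real m / 2) < 1/2 \<longleftrightarrow> even m"
proof (cases "even m")
  case True
  then obtain k where "real m / 2 = real k" by fastforce
  then show ?thesis using True by (simp add: frac_def)
next
  case False
  then obtain k where "m = 2 * k + 1" using oddE by blast
  then have "real m / 2 = real k + 1/2" by simp
  moreover have "frac (real k + 1/2) = 1/2" by (simp add: frac_def)
  ultimately have "frac (real m / 2) = 1/2" by (simp only:)
  with False show ?thesis by simp
qed

lemma X_subset_positive: "X i \<subseteq> {x. 0 < x}"
  by (auto simp: X_def)

lemma mem_X_Suc_iff:
  assumes "2 ^ j dvd x"
  shows "x \<in> X (Suc j) \<longleftrightarrow> 0 < x \<and> 2 ^ Suc j dvd x"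
proof -
  obtain y where y: "x = 2 ^ j * y" using assms by blast
  have "real x * (3/2) ^ Suc j = real (3 ^ Suc j * y) / 2"
    unfolding y by (simp add: power_divide field_simps)
  then have "x \<in> X (Suc j) \<longleftrightarrow> 0 < x \<and> even (3 ^ Suc j * y)"
    unfolding X_def mem_Collect_eq by (simp only: frac_half_less_iff_even)
  also have "even (3 ^ Suc j * y) \<longleftrightarrow> 2 ^ Suc j dvd x"
    unfolding y by (simp add: power_Suc2)
  finally show ?thesis .
qed

text \<open>Intersecting with the positive integers makes the case \<open>n = 0\<close> (empty intersection \<open>UNIV\<close>)
  true as well, so plain induction applies.\<close>
lemma positive_Inter_X:
  "{x. 0 < x} \<inter> (\<Inter>i\<in>{1..n}. X i) = {x. 0 < x \<and> 2 ^ n dvd x}"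
proof (induction n)
  case 0
  then show ?case by simp
next
  case (Suc n)
  have "{1..Suc n} = insert (Suc n) {1..n}" by auto
  then have "{x. 0 < x} \<inter> (\<Inter>i\<in>{1..Suc n}. X i)
      = X (Suc n) \<inter> ({x. 0 < x} \<inter> (\<Inter>i\<in>{1..n}. X i))" by auto
  also have "\<dots> = X (Suc n) \<inter> {x. 0 < x \<and> 2 ^ n dvd x}" by (simp only: Suc.IH)
  also have "\<dots> = {x. 0 < x \<and> 2 ^ Suc n dvd x}"
    using mem_X_Suc_iff[of n] by (auto intro: dvd_mult_left simp: power_Suc2)
  finally show ?case .
qed

theorem lemma4p7:
  fixes n :: nat
  assumes "n \<ge> 1"
  shows "(\<Inter>i\<in>{1..n}. X i) = {x::nat. x > 0 \<and> 2 ^ n dvd x}"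
proof -
  have "(\<Inter>i\<in>{1..n}. X i) \<subseteq> {x. 0 < x}"
    using assms X_subset_positive[of 1] by auto
  then show ?thesis using positive_Inter_X[of n] by blast
qed

end
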